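(* Let $F$ be a field, $U,V$ finite-dimensional $F$-vector spaces with $\dim U=n$ and $\dim V=m$, $A:U\times U\to V$ an alternating bilinear map whose image spans $V$, $u_1<\dots<u_n$ an ordered basis of $U$, and $\mathcal{B}$, $\mathcal{W}(\mathcal{B})$ as in the context. If $\mathcal{B}$ is not a tree of height one, then \[|\mathcal{W}(\mathcal{B})|\ge\left(\sum_{i=2}^{m+1}(n-i)\right)+(m-2),\] and in particular $\dim\operatorname{Im}\Psi\ge\left(\sum_{i=2}^{m+1}(n-i)\right)+(m-2)$.
   Context: $\mathcal{Y}$ is the set of $2$-element subsets of $\{1,\dots,n\}$, totally ordered by $\{i,j\}<\{r,s\}$ iff $\max\{i,j\}<\max\{r,s\}$, or the maxima are equal to $a$ and the remaining element of $\{i,j\}\setminus\{a\}$ is smaller than that of $\{r,s\}\setminus\{a\}$. $\mathcal{B}$ is constructed as follows: $\mathcal{B}_0=B_0=\emptyset$; inductively let $\{i,j\}$ ($i<j$) be the least element of $\mathcal{Y}$ with $A(u_i,u_j)\notin\operatorname{span}(B_k)$, and set $\mathcal{B}_{k+1}=\mathcal{B}_k\cup\{\{i,j\}\}$, $B_{k+1}=B_k\cup\{A(u_i,u_j)\}$; stop at $k=m$ and put $\mathcal{B}=\mathcal{B}_m$. $\mathcal{B}$ is a tree of height one if there is an $i$ with $i\in\{j,l\}$ for every $\{j,l\}\in\mathcal{B}$. $\mathcal{W}(\mathcal{B})$ is the set of $3$-element subsets of $\{1,\dots,n\}$ containing some $2$-element subset belonging to $\mathcal{B}$. $\Psi:U\otimes_F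 U\otimes_F U\to V\otimes_F U$ is the linear map with $\Psi(x\otimes y\otimes z)=A(x,y)\otimes z+A(y,z)\otimes x+A(z,x)\otimes y$. *)

theory Defs
  imports Main "HOL.Vector_Spaces" "HOL-Library.Function_Algebras"
begin

definition alt_bilinear ::
  "('a::field \<Rightarrow> 'u::ab_group_add \<Rightarrow> 'u) \<Rightarrow> ('a \<Rightarrow> 'v::ab_group_add \<Rightarrow> 'v) \<Rightarrow> ('u \<Rightarrow> 'u \<Rightarrow> 'v) \<Rightarrow> bool" where
  "alt_bilinear sU sV A \<longleftrightarrow>
     (\<forall>x. Vector_Spaces.linear sU sV (A x)) \<and>
     (\<forall>y. Vector_Spaces.linear sU sV (\<lambda>x. A x y)) \<and>
     (\<forall>x. A x x = 0)"

definition Yset :: "nat \<Rightarrow> nat set set" where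
  "Yset n = {S. S \<subseteq> {1..n} \<and> card S = 2}"

definition Ylt :: "nat set \<Rightarrow> nat set \<Rightarrow> bool" where
  "Ylt S T \<longleftrightarrow> Max S < Max T \<or> (Max S = Max T \<and> Min S < Min T)"

definition pairvec :: "('u \<Rightarrow> 'u \<Rightarrow> 'v) \<Rightarrow> (nat \<Rightarrow> 'u) \<Rightarrow> nat set \<Rightarrow> 'v" where
  "pairvec A u S = A (u (Min S)) (u (Max S))"

fun Bseq :: "('a::field \<Rightarrow> 'v::ab_group_add \<Rightarrow> 'v) \<Rightarrow> ('u \<Rightarrow> 'u \<Rightarrow> 'v) \<Rightarrow> (nat \<Rightarrow> 'u) \<Rightarrow> nat
              \<Rightarrow> nat \<Rightarrow> nat set set" where
  "Bseq sV A u n 0 = {}"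
| "Bseq sV A u n (Suc k) =
     (let C = {S \<in> Yset n. pairvec A u S \<notin> module.span sV (pairvec A u ` Bseq sV A u n k)}
      in if C = {} then Bseq sV A u n k
         else insert (THE S. S \<in> C \<and> (\<forall>T\<in>C. T \<noteq> S \<longrightarrow> Ylt S T)) (Bseq sV A u n k))"

definition Bset :: "('a::field \<Rightarrow> 'v::ab_group_add \<Rightarrow> 'v) \<Rightarrow> ('u \<Rightarrow> 'u \<Rightarrow> 'v) \<Rightarrow> (nat \<Rightarrow> 'u) \<Rightarrow> nat \<Rightarrow> nat set set" where
  "Bset sV A u n = Bseq sV A u n (vector_space.dim sV (UNIV :: 'v set))"

definition tree_height_one :: "nat set set \<Rightarrow> bool" where
  "tree_height_one B \<longleftrightarrow> (\<exists>i. \<forall>S\<in>B. i \<in> S)"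

definition Wset :: "nat \<Rightarrow> nat set set \<Rightarrow> nat set set" where
  "Wset n B = {T. T \<subseteq> {1..n} \<and> card T = 3 \<and> (\<exists>S\<in>B. S \<subseteq> T)}"

text \<open>Coordinate model of V \<otimes> U: an element \<Sum>_k v_k \<otimes> u_k is the function k \<mapsto> v_k
  (supported in {1..n}); scalar multiplication is pointwise.\<close>
definition tscale :: "('a \<Rightarrow> 'v \<Rightarrow> 'v) \<Rightarrow> 'a \<Rightarrow> (nat \<Rightarrow> 'v) \<Rightarrow> (nat \<Rightarrow> 'v)" where
  "tscale sV c f = (\<lambda>k. sV c (f k))"

text \<open>\<Psi>(u_a \<otimes> u_b \<otimes> u_c) = A(u_a,u_b) \<otimes> u_c + A(u_b,u_c) \<otimes> u_a + A(u_c,u_a) \<otimes> u_b, in coordinates.\<close>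
definition Psi_basis :: "('u \<Rightarrow> 'u \<Rightarrow> 'v::ab_group_add) \<Rightarrow> (nat \<Rightarrow> 'u) \<Rightarrow> nat \<Rightarrow> nat \<Rightarrow> nat \<Rightarrow> (nat \<Rightarrow> 'v)" where
  "Psi_basis A u a b c = (\<lambda>k. (if k = c then A (u a) (u b) else 0)
                             + (if k = a then A (u b) (u c) else 0)
                             + (if k = b then A (u c) (u a) else 0))"

text \<open>Im \<Psi> is spanned by the images of the basis tensors u_a \<otimes> u_b \<otimes> u_c.\<close>
definition Im_Psi :: "('a::field \<Rightarrow> 'v::ab_group_add \<Rightarrow> 'v) \<Rightarrow> ('u \<Rightarrow> 'u \<Rightarrow> 'v) \<Rightarrow> (nat \<Rightarrow> 'u) \<Rightarrow> nat \<Rightarrow> (nat \<Rightarrow> 'v) set" where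
  "Im_Psi sV A u n = module.span (tscale sV) {Psi_basis A u a b c | a b c. a \<in> {1..n} \<and> b \<in> {1..n} \<and> c \<in> {1..n}}"

end

theory Submission
  imports Defs
begin

(* Combinatorially, adding an edge g to a graph E on {1..n} creates at least
   n - 2 - |E| new triples containing an edge, and one more when g is good for E; the edges of a
   graph that is not a star can be ordered so that all but two of them are good, whence
   |W(E)| >= sum_{k<|E|} (n - 2 - k) + |E| - 2.
   Linearly, for the greedy basis B the images under Psi of the triples in W(B) are independent:
   in a vanishing combination take the triple T0 of largest binary weight, an edge S0 of B inside
   T0 and {k} = T0 - S0. At coordinate k, every other triple contributes a vector in the span of
   the pairs of B preceding S0, while T0 contributes a nonzero multiple of A(u_i, u_j) for
   S0 = {i, j}, contradicting the independence of B. *)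

section \<open>Graphs on \<open>{1..n}\<close> and the triples they cover\<close>

lemma card_2_sorted:
  assumes "card (S :: nat set) = 2"
  obtains p q where "p < q" "S = {p, q}"
proof -
  obtain x y where "S = {x, y}" "x \<noteq> y" using assms by (auto simp: card_2_iff)
  then show ?thesis
    using that[of x y] that[of y x] by (cases "x < y") (auto simp: insert_commute)
qed

lemma card_3_sorted:
  assumes "card (T :: nat set) = 3"
  obtains x y z where "x < y" "y < z" "T = {x, y, z}"
proof -
  obtain a b c where T: "T = {a, b, c}" "a \<noteq> b" "b \<noteq> c" "a \<noteq> c"
    using assms by (auto simp: card_3_iff)
  consider "a < b" "b < c" | "a < c" "c < b" | "b < a" "a < c"
    | "b < c" "c < a" | "c < a" "a < b" | "c < b" "b < a"
    using T by linarith
  then show ?thesis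
  proof cases
    case 1 then show ?thesis using that[of a b c] T(1) by blast
  next
    case 2 then show ?thesis using that[of a c b] T(1) by (simp add: insert_commute)
  next
    case 3 then show ?thesis using that[of b a c] T(1) by (simp add: insert_commute)
  next
    case 4 then show ?thesis using that[of b c a] T(1) by (simp add: insert_commute)
  next
    case 5 then show ?thesis using that[of c a b] T(1) by (simp add: insert_commute)
  next
    case 6 then show ?thesis using that[of c b a] T(1) by (simp add: insert_commute)
  qed
qed

lemma card_2_eq_doubleton:
  assumes "card S = 2" "a \<in> S" "b \<in> S" "a \<noteq> b"
  shows "S = {a, b}"
proof -
  have "finite S" using assms(1) by (metis card.infinite zero_neq_numeral)
  moreover have "card {a, b} = card S" using assms by simp
  ultimately show ?thesis using assms(2-3) card_subset_eq[of S "{a, b}"] by blast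
qed

lemma YsetE:
  assumes "S \<in> Yset n"
  obtains p q where "p < q" "S = {p, q}" "1 \<le> p" "q \<le> n"
proof -
  have S: "S \<subseteq> {1..n}" "card S = 2" using assms by (auto simp: Yset_def)
  obtain p q where "p < q" "S = {p, q}" using card_2_sorted[OF S(2)] .
  with S(1) that show ?thesis by auto
qed

lemma card_Yset: "S \<in> Yset n \<Longrightarrow> card S = 2"
  by (simp add: Yset_def)

lemma finite_Yset: "finite (Yset n)"
  by (rule finite_subset[of _ "Pow {1..n}"]) (auto simp: Yset_def)

lemma finite_Wset: "finite (Wset n E)"
  by (rule finite_subset[of _ "Pow {1..n}"]) (auto simp: Wset_def)

lemma Wset_mono: "E \<subseteq> E' \<Longrightarrow> Wset n E \<subseteq> Wset n E'"
  unfolding Wset_def by blast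

definition blocked :: "nat \<Rightarrow> nat set \<Rightarrow> nat set set \<Rightarrow> nat set" where
  "blocked n g E = {x \<in> {1..n} - g. \<exists>e\<in>E. e \<subseteq> insert x g}"

lemma card_Wset_insert:
  assumes "g \<in> Yset n"
  shows "card (Wset n E) + (n - 2) \<le> card (Wset n (insert g E)) + card (blocked n g E)"
proof -
  have g: "g \<subseteq> {1..n}" "card g = 2" "finite g"
    using assms finite_subset[of g "{1..n}"] by (auto simp: Yset_def)
  define X where "X = {1..n} - g - blocked n g E"
  have new: "(\<lambda>x. insert x g) ` X \<subseteq> Wset n (insert g E) - Wset n E"
    using g by (auto simp: X_def Wset_def blocked_def)
  have "inj_on (\<lambda>x. insert x g) X"
    by (rule inj_onI) (auto simp: X_def)
  then have "card X \<le> card (Wset n (insert g E) - Wset n E)"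
    using card_mono[OF _ new] finite_Wset by (simp add: card_image)
  also have "\<dots> = card (Wset n (insert g E)) - card (Wset n E)"
    using Wset_mono[of E "insert g E"] by (intro card_Diff_subset finite_Wset) auto
  moreover have "card (Wset n E) \<le> card (Wset n (insert g E))"
    by (intro card_mono finite_Wset Wset_mono) auto
  ultimately have "card X + card (Wset n E) \<le> card (Wset n (insert g E))"
    by linarith
  moreover have "card X + card (blocked n g E) = n - 2"
  proof -
    have "blocked n g E \<subseteq> {1..n} - g" by (auto simp: blocked_def)
    then have "card X + card (blocked n g E) = card ({1..n} - g)"
      unfolding X_def by (metis card_Diff_subset card_mono diff_add finite_Diff finite_atLeastAtMost finite_subset)
    also have "\<dots> = n - 2" using g by (simp add: card_Diff_subset)
    finally show ?thesis .
  qed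
  ultimately show ?thesis by linarith
qed

lemma blocked_subset_image:
  assumes "E \<subseteq> Yset n" "g \<in> Yset n" "g \<notin> E"
  shows "blocked n g E \<subseteq> (\<lambda>e. Max (e - g)) ` {e \<in> E. e \<inter> g \<noteq> {}}"
proof
  fix x assume "x \<in> blocked n g E"
  then obtain e where x: "x \<notin> g" and e: "e \<in> E" "e \<subseteq> insert x g"
    by (auto simp: blocked_def)
  have "card e = 2" "card g = 2" using e assms by (auto simp: Yset_def)
  have "x \<in> e"
  proof (rule ccontr)
    assume "x \<notin> e"
    then have "e \<subseteq> g" using e by blast
    then have "e = g" using \<open>card e = 2\<close> \<open>card g = 2\<close>
      by (metis card_subset_eq card.infinite zero_neq_numeral)
    then show False using e assms by simp
  qed
  then have "e - g = {x}" using e x by blast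
  moreover have "e \<inter> g \<noteq> {}"
  proof
    assume "e \<inter> g = {}"
    then have "e \<subseteq> {x}" using e by blast
    then show False using card_mono[of "{x}" e] \<open>card e = 2\<close> by simp
  qed
  ultimately show "x \<in> (\<lambda>e. Max (e - g)) ` {e \<in> E. e \<inter> g \<noteq> {}}"
    using e by (intro image_eqI[of _ _ e]) auto
qed

(* An edge g is good for E when adding it creates one more new triple than the worst case:
   some edge of E blocks no vertex because it misses g, or two edges of E block the same
   vertex x. *)
definition good_edge :: "nat set \<Rightarrow> nat set set \<Rightarrow> bool" where
  "good_edge g E \<longleftrightarrow> (\<exists>e\<in>E. e \<inter> g = {}) \<or> (\<exists>x. \<exists>a\<in>g. \<exists>b\<in>g. a \<noteq> b \<and> {a, x} \<in> E \<and> {b, x} \<in> E)"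

lemma good_edge_mono: "good_edge g E \<Longrightarrow> E \<subseteq> E' \<Longrightarrow> good_edge g E'"
  unfolding good_edge_def by blast

lemma good_edgeI_disjoint: "e \<in> E \<Longrightarrow> e \<inter> g = {} \<Longrightarrow> good_edge g E"
  unfolding good_edge_def by blast

lemma good_edgeI_common:
  "a \<in> g \<Longrightarrow> b \<in> g \<Longrightarrow> a \<noteq> b \<Longrightarrow> {a, x} \<in> E \<Longrightarrow> {b, x} \<in> E \<Longrightarrow> good_edge g E"
  unfolding good_edge_def by blast

lemma card_blocked_le:
  assumes E: "E \<subseteq> Yset n" "finite E" and g: "g \<in> Yset n" "g \<notin> E"
  shows "card (blocked n g E) + (if good_edge g E then 1 else 0) \<le> card E"
proof -
  define adj where "adj = {e \<in> E. e \<inter> g \<noteq> {}}"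
  define far where "far e = Max (e - g)" for e
  have "finite adj" using E by (simp add: adj_def)
  have blocked_le: "card (blocked n g E) \<le> card (far ` adj)"
    using blocked_subset_image[OF E(1) g] \<open>finite adj\<close>
    by (intro card_mono) (auto simp: adj_def far_def)
  have image_le: "card (far ` adj) \<le> card adj" using \<open>finite adj\<close> by (rule card_image_le)
  have adj_le: "card adj \<le> card E" using E by (auto simp: adj_def intro!: card_mono)
  show ?thesis
  proof (cases "good_edge g E")
    case False
    then show ?thesis using blocked_le image_le adj_le by simp
  next
    case True
    then consider e where "e \<in> E" "e \<inter> g = {}"
      | x a b where "a \<in> g" "b \<in> g" "a \<noteq> b" "{a, x} \<in> E" "{b, x} \<in> E"
      unfolding good_edge_def by blast
    then have "card (far ` adj) < card E"
    proof cases
      case (1 e)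
      then have "adj \<subseteq> E - {e}" by (auto simp: adj_def)
      then have "card adj \<le> card (E - {e})" using E by (intro card_mono) auto
      also have "\<dots> < card E" using E \<open>e \<in> E\<close> by (intro card_Diff1_less)
      finally have "card adj < card E" .
      then show ?thesis using image_le by linarith
    next
      case (2 x a b)
      have "x \<noteq> a" "x \<noteq> b" using 2 E by (auto simp: Yset_def)
      have "x \<notin> g"
      proof
        assume "x \<in> g"
        then have "g = {a, x}" using card_2_eq_doubleton[OF card_Yset[OF g(1)]] 2 \<open>x \<noteq> a\<close> by blast
        then show False using 2 g by simp
      qed
      then have "far {a, x} = far {b, x}" "{a, x} \<in> adj" "{b, x} \<in> adj"
        using 2 by (auto simp: far_def adj_def)
      moreover have "{a, x} \<noteq> {b, x}" using 2 \<open>x \<noteq> a\<close> by (auto simp: doubleton_eq_iff)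
      ultimately have "\<not> inj_on far adj" by (meson inj_onD)
      then have "card (far ` adj) \<noteq> card adj"
        using eq_card_imp_inj_on[OF \<open>finite adj\<close>] by blast
      then show ?thesis using image_le adj_le by linarith
    qed
    then show ?thesis using True blocked_le by simp
  qed
qed

definition baseline :: "nat \<Rightarrow> nat \<Rightarrow> int" where
  "baseline n k = (\<Sum>i=2..k+1. int n - int i)"

definition excess :: "nat \<Rightarrow> nat set set \<Rightarrow> int" where
  "excess n E = int (card (Wset n E)) - baseline n (card E)"

lemma baseline_Suc: "baseline n (Suc k) = baseline n k + int n - int k - 2"
proof -
  have "{2..Suc k + 1} = insert (k + 2) {2..k + 1}" by auto
  then show ?thesis by (simp add: baseline_def)
qed

lemma excess_empty: "excess n {} = 0"
  by (simp add: excess_def baseline_def Wset_def)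

lemma excess_insert:
  assumes "E \<subseteq> Yset n" "finite E" "g \<in> Yset n" "g \<notin> E"
  shows "excess n E + (if good_edge g E then 1 else 0) \<le> excess n (insert g E)"
proof -
  have "2 \<le> n" using card_mono[of "{1..n}" g] assms(3) by (auto simp: Yset_def)
  then show ?thesis
    using card_Wset_insert[OF assms(3), of E] card_blocked_le[OF assms] assms(2,4)
    by (cases "good_edge g E") (simp_all add: excess_def baseline_Suc)
qed

lemma excess_union:
  assumes "finite R" "R \<subseteq> Yset n" "E \<subseteq> Yset n" "finite E" "R \<inter> E = {}"
  shows "excess n E + int (card {g \<in> R. good_edge g E}) \<le> excess n (E \<union> R)"
  using assms
proof (induction R rule: finite_induct)
  case empty
  then show ?case by simp
next
  case (insert g R)
  have "excess n E + int (card {h \<in> R. good_edge h E}) \<le> excess n (E \<union> R)"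
    using insert by auto
  moreover have "excess n (E \<union> R) + (if good_edge g (E \<union> R) then 1 else 0)
      \<le> excess n (insert g (E \<union> R))"
    using insert by (intro excess_insert) auto
  moreover have "good_edge g E \<Longrightarrow> good_edge g (E \<union> R)"
    by (rule good_edge_mono) auto
  moreover have "{h \<in> insert g R. good_edge h E}
      = (if good_edge g E then insert g {h \<in> R. good_edge h E} else {h \<in> R. good_edge h E})"
    by auto
  then have "card {h \<in> insert g R. good_edge h E}
      = card {h \<in> R. good_edge h E} + (if good_edge g E then 1 else 0)"
    using insert by simp
  ultimately show ?case by (cases "good_edge g E"; cases "good_edge g (E \<union> R)") auto
qed

lemma excess_nonneg:
  assumes "E \<subseteq> Yset n" "finite E"
  shows "0 \<le> excess n E"
  using excess_union[of E n "{}"] assms by (simp add: excess_empty)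

lemma excess_extend:
  assumes "E1 \<subseteq> E" "E \<subseteq> Yset n" "finite E"
    and "int (card E1) - 2 \<le> excess n E1" and "\<forall>g \<in> E - E1. good_edge g E1"
  shows "int (card E) - 2 \<le> excess n E"
proof -
  have "finite E1" using assms(1,3) by (rule finite_subset)
  have "{g \<in> E - E1. good_edge g E1} = E - E1" using assms(5) by blast
  then have "excess n E1 + int (card (E - E1)) \<le> excess n (E1 \<union> (E - E1))"
    using excess_union[of "E - E1" n E1] assms(1-3) \<open>finite E1\<close> by fastforce
  moreover have "E1 \<union> (E - E1) = E" using assms(1) by blast
  moreover have "int (card (E - E1)) = int (card E) - int (card E1)"
    using assms(1,3) \<open>finite E1\<close> by (simp add: card_Diff_subset card_mono of_nat_diff)
  ultimately show ?thesis using assms(4) by simp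
qed

lemma good_edge_crossing:
  assumes "card e = 2" "card f = 2" "card x = 2" "card y = 2" "e \<inter> f = {}"
    and "x \<inter> e \<noteq> {}" "x \<inter> f \<noteq> {}" "y \<inter> e \<noteq> {}" "y \<inter> f \<noteq> {}" "x \<noteq> y"
    and "e \<in> E" "f \<in> E" "y \<in> E"
  shows "good_edge x E"
proof -
  obtain p q where pq: "p \<in> e" "q \<in> f" "p \<in> x" "q \<in> x" using assms(6,7) by blast
  then have x: "x = {p, q}" using card_2_eq_doubleton[OF assms(3)] assms(5) by blast
  obtain r s where rs: "r \<in> e" "s \<in> f" "r \<in> y" "s \<in> y" using assms(8,9) by blast
  then have y: "y = {r, s}" using card_2_eq_doubleton[OF assms(4)] assms(5) by blast
  have "p \<noteq> q" using pq assms(5) by auto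
  consider "x \<inter> y = {}" | "p = r" "q \<noteq> s" | "q = s" "p \<noteq> r"
    using pq rs x y assms(5,10) by blast
  then show ?thesis
  proof cases
    case 1
    then show ?thesis using good_edgeI_disjoint[OF assms(13)] by (simp add: inf_commute)
  next
    case 2
    then have "f = {q, s}" using card_2_eq_doubleton[OF assms(2)] pq(2) rs(2) by blast
    then have "{p, s} \<in> E" "{q, s} \<in> E" using assms(12,13) y 2 by auto
    then show ?thesis using good_edgeI_common[of p x q s E] pq(3,4) \<open>p \<noteq> q\<close> by simp
  next
    case 3
    then have "e = {p, r}" using card_2_eq_doubleton[OF assms(1)] pq(1) rs(1) by blast
    then have "{p, r} \<in> E" "{q, r} \<in> E" using assms(11,13) y 3 by (auto simp: insert_commute)
    then show ?thesis using good_edgeI_common[of p x q r E] pq(3,4) \<open>p \<noteq> q\<close> by simp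
  qed
qed

lemma excess_disjoint_edges:
  assumes E: "E \<subseteq> Yset n" "finite E" and ef: "e \<in> E" "f \<in> E" "e \<inter> f = {}"
  shows "int (card E) - 2 \<le> excess n E"
proof -
  have Y: "e \<in> Yset n" "f \<in> Yset n" using E ef by auto
  have card: "card e = 2" "card f = 2" using Y by (auto simp: card_Yset)
  then have "e \<noteq> f" using ef by auto
  have "0 \<le> excess n {e}" using Y by (intro excess_nonneg) auto
  moreover have "good_edge f {e}" using good_edgeI_disjoint[of e "{e}" f] ef by simp
  ultimately have pair: "1 \<le> excess n {e, f}"
    using excess_insert[of "{e}" n f] Y \<open>e \<noteq> f\<close> by (simp add: insert_commute)
  have miss_good: "good_edge g E1" if "g \<inter> e = {} \<or> g \<inter> f = {}" "e \<in> E1" "f \<in> E1" for g E1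
    using that good_edgeI_disjoint[of e E1 g] good_edgeI_disjoint[of f E1 g] by (auto simp: inf_commute)
  show ?thesis
  proof (cases "\<exists>x\<in>E. x \<inter> e \<noteq> {} \<and> x \<inter> f \<noteq> {}")
    case False
    show ?thesis
    proof (rule excess_extend[OF _ E])
      show "{e, f} \<subseteq> E" using ef by auto
      show "int (card {e, f}) - 2 \<le> excess n {e, f}" using pair \<open>e \<noteq> f\<close> by simp
      show "\<forall>g\<in>E - {e, f}. good_edge g {e, f}" using False by (auto intro!: miss_good)
    qed
  next
    case True
    then obtain x where x: "x \<in> E" "x \<inter> e \<noteq> {}" "x \<inter> f \<noteq> {}" by blast
    have "x \<notin> {e, f}" using x ef by auto
    then have "excess n {e, f} \<le> excess n {x, e, f}"
      using excess_insert[of "{e, f}" n x] Y x E by (cases "good_edge x {e, f}") auto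
    show ?thesis
    proof (rule excess_extend[OF _ E])
      show "{x, e, f} \<subseteq> E" using ef x by auto
      show "int (card {x, e, f}) - 2 \<le> excess n {x, e, f}"
        using pair \<open>excess n {e, f} \<le> _\<close> \<open>x \<notin> {e, f}\<close> \<open>e \<noteq> f\<close> by simp
      show "\<forall>g\<in>E - {x, e, f}. good_edge g {x, e, f}"
      proof
        fix g assume g: "g \<in> E - {x, e, f}"
        show "good_edge g {x, e, f}"
        proof (cases "g \<inter> e = {} \<or> g \<inter> f = {}")
          case True
          then show ?thesis by (intro miss_good) auto
        next
          case False
          have "card g = 2" "card x = 2" using g x E by (auto simp: card_Yset)
          moreover have "g \<noteq> x" using g by auto
          ultimately show ?thesis
            using good_edge_crossing[OF card \<open>card g = 2\<close> \<open>card x = 2\<close> ef(3) _ _ x(2,3)] False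
            by auto
        qed
      qed
    qed
  qed
qed

lemma intersecting_nonstar_triangle:
  assumes E: "E \<subseteq> Yset n" and meet: "\<forall>e\<in>E. \<forall>f\<in>E. e \<inter> f \<noteq> {}"
    and nonstar: "\<not> tree_height_one E"
  obtains a b c where "a \<noteq> b" "b \<noteq> c" "a \<noteq> c" "E = {{a, b}, {b, c}, {a, c}}"
proof -
  have no_common: "\<exists>f\<in>E. i \<notin> f" for i using nonstar by (auto simp: tree_height_one_def)
  then obtain e where "e \<in> E" by blast
  then obtain a b where ab: "a < b" "e = {a, b}" using E YsetE[of e n] by blast
  obtain f1 where f1: "f1 \<in> E" "a \<notin> f1" using no_common by blast
  obtain f2 where f2: "f2 \<in> E" "b \<notin> f2" using no_common by blast
  have meet': "g \<inter> h \<noteq> {}" if "g \<in> E" "h \<in> E" for g h using meet that by blast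
  have "b \<in> f1" using meet'[OF f1(1) \<open>e \<in> E\<close>] f1(2) ab(2) by auto
  have card: "card g = 2" if "g \<in> E" for g using that E by (auto simp: card_Yset)
  obtain c where "c \<in> f1" "c \<noteq> b" using card[OF f1(1)] by (auto simp: card_2_iff)
  then have f1_eq: "f1 = {b, c}" using card_2_eq_doubleton[OF card[OF f1(1)] \<open>b \<in> f1\<close>] by blast
  have "a \<noteq> c" using f1 \<open>c \<in> f1\<close> by auto
  have "a \<in> f2" using meet'[OF f2(1) \<open>e \<in> E\<close>] f2(2) ab(2) by auto
  moreover have "c \<in> f2" using meet'[OF f2(1) f1(1)] f2(2) f1_eq by auto
  ultimately have f2_eq: "f2 = {a, c}" using card_2_eq_doubleton[OF card[OF f2(1)]] \<open>a \<noteq> c\<close> by blast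
  have "g \<in> {{a, b}, {b, c}, {a, c}}" if "g \<in> E" for g
  proof -
    have "g \<inter> {a, b} \<noteq> {}" "g \<inter> {b, c} \<noteq> {}" "g \<inter> {a, c} \<noteq> {}"
      using meet'[OF that \<open>e \<in> E\<close>] meet'[OF that f1(1)] meet'[OF that f2(1)] ab(2) f1_eq f2_eq
      by simp_all
    then consider "a \<in> g" "b \<in> g" | "a \<in> g" "c \<in> g" | "b \<in> g" "c \<in> g" by blast
    then show ?thesis
    proof cases
      case 1
      then show ?thesis using card_2_eq_doubleton[OF card[OF that] 1] ab by simp
    next
      case 2
      then show ?thesis using card_2_eq_doubleton[OF card[OF that] 2] \<open>a \<noteq> c\<close> by simp
    next
      case 3
      then show ?thesis using card_2_eq_doubleton[OF card[OF that] 3] \<open>c \<noteq> b\<close> by simp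
    qed
  qed
  moreover have "{a, b} \<in> E" "{b, c} \<in> E" "{a, c} \<in> E"
    using \<open>e \<in> E\<close> f1(1) f2(1) ab(2) f1_eq f2_eq by simp_all
  ultimately have "E = {{a, b}, {b, c}, {a, c}}" by blast
  then show ?thesis using that ab \<open>a \<noteq> c\<close> \<open>c \<noteq> b\<close> by auto
qed

lemma excess_nonstar:
  assumes E: "E \<subseteq> Yset n" "finite E" and nonstar: "\<not> tree_height_one E"
  shows "int (card E) - 2 \<le> excess n E"
proof (cases "\<exists>e\<in>E. \<exists>f\<in>E. e \<inter> f = {}")
  case True
  then obtain e f where "e \<in> E" "f \<in> E" "e \<inter> f = {}" by blast
  then show ?thesis by (rule excess_disjoint_edges[OF E])
next
  case False
  then have "\<forall>e\<in>E. \<forall>f\<in>E. e \<inter> f \<noteq> {}" by blast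
  then obtain a b c where abc: "a \<noteq> b" "b \<noteq> c" "a \<noteq> c" "E = {{a, b}, {b, c}, {a, c}}"
    by (rule intersecting_nonstar_triangle[OF E(1) _ nonstar])
  define E1 where "E1 = {{a, b}, {b, c}}"
  have "E1 \<subseteq> E" using abc(4) by (auto simp: E1_def)
  show ?thesis
  proof (rule excess_extend[OF \<open>E1 \<subseteq> E\<close> E])
    have "{a, b} \<noteq> {b, c}" using abc by (auto simp: doubleton_eq_iff)
    then have "int (card E1) - 2 = 0" by (simp add: E1_def)
    moreover have "0 \<le> excess n E1"
      using \<open>E1 \<subseteq> E\<close> E by (intro excess_nonneg) (auto intro: finite_subset)
    ultimately show "int (card E1) - 2 \<le> excess n E1" by simp
    have "good_edge {a, c} E1"
      using good_edgeI_common[of a "{a, c}" c b E1] abc by (simp add: E1_def insert_commute)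
    moreover have "E - E1 \<subseteq> {{a, c}}" using abc(4) by (auto simp: E1_def)
    ultimately show "\<forall>g\<in>E - E1. good_edge g E1" by blast
  qed
qed

section \<open>The greedy basis of pairs\<close>

definition weight :: "nat set \<Rightarrow> nat" where
  "weight X = (\<Sum>x\<in>X. 2 ^ x)"

lemma weight_insert: "finite X \<Longrightarrow> k \<notin> X \<Longrightarrow> weight (insert k X) = 2 ^ k + weight X"
  by (simp add: weight_def)

lemma pow2_sum_less: "a < b \<Longrightarrow> b < d \<Longrightarrow> (2::nat) ^ a + 2 ^ b < 2 ^ d"
proof -
  assume "a < b" "b < d"
  then have "(2::nat) ^ a + 2 ^ b < 2 ^ Suc b" by simp
  also have "\<dots> \<le> 2 ^ d" using \<open>b < d\<close> by (intro power_increasing) auto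
  finally show ?thesis .
qed

lemma Ylt_iff_weight_less:
  assumes "P \<in> Yset n" "Q \<in> Yset n"
  shows "Ylt P Q \<longleftrightarrow> weight P < weight Q"
proof -
  obtain a b where ab: "a < b" "P = {a, b}" using YsetE[OF assms(1)] by blast
  obtain c d where cd: "c < d" "Q = {c, d}" using YsetE[OF assms(2)] by blast
  have weights: "weight P = 2 ^ a + 2 ^ b" "weight Q = 2 ^ c + 2 ^ d"
    using ab cd by (simp_all add: weight_def)
  have "Ylt P Q \<longleftrightarrow> b < d \<or> (b = d \<and> a < c)" using ab cd by (simp add: Ylt_def)
  also have "\<dots> \<longleftrightarrow> (2::nat) ^ a + 2 ^ b < 2 ^ c + 2 ^ d"
  proof (cases b d rule: linorder_cases)
    case less
    then show ?thesis using pow2_sum_less[OF ab(1) less] by simp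
  next
    case equal
    then show ?thesis by simp
  next
    case greater
    then show ?thesis using pow2_sum_less[OF cd(1) greater] by simp
  qed
  finally show ?thesis using weights by simp
qed

lemma Ylt_trichotomy:
  assumes "P \<in> Yset n" "Q \<in> Yset n" "P \<noteq> Q"
  shows "Ylt P Q \<or> Ylt Q P"
proof -
  obtain a b where "a < b" "P = {a, b}" using YsetE[OF assms(1)] by blast
  moreover obtain c d where "c < d" "Q = {c, d}" using YsetE[OF assms(2)] by blast
  ultimately show ?thesis using assms(3) by (auto simp: Ylt_def)
qed

lemma Ylt_asym: "P \<in> Yset n \<Longrightarrow> Q \<in> Yset n \<Longrightarrow> Ylt P Q \<Longrightarrow> \<not> Ylt Q P"
  by (simp add: Ylt_iff_weight_less)

lemma Ylt_trans: "P \<in> Yset n \<Longrightarrow> Q \<in> Yset n \<Longrightarrow> R \<in> Yset n \<Longrightarrow> Ylt P Q \<Longrightarrow> Ylt Q R \<Longrightarrow> Ylt P R"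
  by (simp add: Ylt_iff_weight_less)

lemma Ylt_least_exists:
  assumes "C \<subseteq> Yset n" "C \<noteq> {}"
  shows "\<exists>N\<in>C. \<forall>T\<in>C. T \<noteq> N \<longrightarrow> Ylt N T"
proof -
  obtain N where N: "N \<in> C" "\<forall>T\<in>C. weight N \<le> weight T"
    using ex_has_least_nat[of "\<lambda>S. S \<in> C" _ weight] assms(2) by blast
  have "Ylt N T" if "T \<in> C" "T \<noteq> N" for T
    using Ylt_trichotomy[of N n T] Ylt_iff_weight_less[of T n N] N that assms(1) by fastforce
  with N(1) show ?thesis by blast
qed

lemma the_Ylt_least:
  assumes "C \<subseteq> Yset n" "C \<noteq> {}"
  defines "N \<equiv> THE S. S \<in> C \<and> (\<forall>T\<in>C. T \<noteq> S \<longrightarrow> Ylt S T)"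
  shows "N \<in> C" "\<forall>T\<in>C. T \<noteq> N \<longrightarrow> Ylt N T"
proof -
  obtain N0 where N0: "N0 \<in> C \<and> (\<forall>T\<in>C. T \<noteq> N0 \<longrightarrow> Ylt N0 T)"
    using Ylt_least_exists[OF assms(1,2)] by blast
  have unique: "S = N0" if "S \<in> C \<and> (\<forall>T\<in>C. T \<noteq> S \<longrightarrow> Ylt S T)" for S
    using that N0 Ylt_asym[of S n N0] assms(1) by blast
  have "N = N0" unfolding N_def using N0 unique by (rule the_equality)
  with N0 show "N \<in> C" "\<forall>T\<in>C. T \<noteq> N \<longrightarrow> Ylt N T" by simp_all
qed

declare Bseq.simps(2) [simp del]

locale greedy_pairs = vector_space sV
  for sV :: "'a::field \<Rightarrow> 'v::ab_group_add \<Rightarrow> 'v" +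
  fixes A :: "'u \<Rightarrow> 'u \<Rightarrow> 'v" and u :: "nat \<Rightarrow> 'u" and n :: nat
begin

abbreviation "pv \<equiv> pairvec A u"
abbreviation "Bs \<equiv> Bseq sV A u n"

definition candidates :: "nat \<Rightarrow> nat set set" where
  "candidates k = {S \<in> Yset n. pv S \<notin> span (pv ` Bs k)}"

lemma Bseq_Suc_cases:
  obtains "candidates k = {}" "Bs (Suc k) = Bs k"
  | N where "N \<in> candidates k" "\<forall>T\<in>candidates k. T \<noteq> N \<longrightarrow> Ylt N T"
      "Bs (Suc k) = insert N (Bs k)"
proof (cases "candidates k = {}")
  case True
  then show ?thesis using that(1) by (simp add: Bseq.simps(2) candidates_def[symmetric] Let_def)
next
  case False
  moreover have "candidates k \<subseteq> Yset n" by (auto simp: candidates_def)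
  ultimately show ?thesis
    using that(2) the_Ylt_least[of "candidates k" n]
    by (simp add: Bseq.simps(2) candidates_def[symmetric] Let_def)
qed

lemma Bseq_subset_Yset: "Bs k \<subseteq> Yset n"
proof (induction k)
  case (Suc k)
  then show ?case by (cases rule: Bseq_Suc_cases[of k]) (auto simp: candidates_def)
qed simp

lemma finite_Bseq: "finite (Bs k)"
  using Bseq_subset_Yset finite_Yset by (rule finite_subset)

lemma independent_Bseq: "independent (pv ` Bs k)"
proof (induction k)
  case (Suc k)
  then show ?case
    by (cases rule: Bseq_Suc_cases[of k]) (simp_all add: candidates_def independent_insertI)
qed (simp add: independent_empty)

lemma inj_on_Bseq: "inj_on pv (Bs k)"
proof (induction k)
  case (Suc k)
  then show ?case
    by (cases rule: Bseq_Suc_cases[of k]) (auto simp: candidates_def span_base)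
qed simp

lemma card_Bseq_le: "card (Bs k) \<le> k"
proof (induction k)
  case (Suc k)
  then show ?case
    by (cases rule: Bseq_Suc_cases[of k]) (auto intro: le_trans[OF card_insert_le_m1] simp: finite_Bseq)
qed simp

lemma card_Bseq: "card (Bs k) = k \<or> (\<forall>P\<in>Yset n. pv P \<in> span (pv ` Bs k))"
proof (induction k)
  case (Suc k)
  show ?case
  proof (cases rule: Bseq_Suc_cases[of k])
    case 1
    then show ?thesis by (auto simp: candidates_def)
  next
    case (2 N)
    then have "N \<notin> Bs k" by (auto simp: candidates_def span_base)
    moreover have "card (Bs k) = k" using Suc.IH 2 by (auto simp: candidates_def)
    ultimately show ?thesis using 2 finite_Bseq by simp
  qed
qed simp

lemma Bseq_skipped:
  assumes "P \<in> Yset n" "P \<notin> Bs k" "\<exists>S\<in>Bs k. Ylt P S"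
  shows "pv P \<in> span (pv ` {S \<in> Bs k. Ylt S P})"
  using assms
proof (induction k)
  case (Suc k)
  show ?case
  proof (cases rule: Bseq_Suc_cases[of k])
    case 1
    then show ?thesis using Suc by simp
  next
    case (2 N)
    note N = 2(1,2) and Bs = 2(3)
    have mono: "span (pv ` {S \<in> Bs k. Ylt S P}) \<subseteq> span (pv ` {S \<in> Bs (Suc k). Ylt S P})"
      by (intro span_mono) (auto simp: Bs)
    show ?thesis
    proof (cases "\<exists>S\<in>Bs k. Ylt P S")
      case True
      then show ?thesis using Suc mono Bs by auto
    next
      case False
      then have "Ylt P N" using Suc.prems Bs by auto
      have "{S \<in> Bs k. Ylt S P} = Bs k"
        using False Suc.prems Bs Bseq_subset_Yset Ylt_trichotomy[of _ n P] by blast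
      moreover have "P \<notin> candidates k"
        using N Suc.prems Bs \<open>Ylt P N\<close> Ylt_asym[of P n N] by (auto simp: candidates_def)
      ultimately show ?thesis using Suc.prems(1) mono by (auto simp: candidates_def)
    qed
  qed
qed simp

lemma pairvec_below_Bseq:
  assumes "P \<in> Yset n" "S0 \<in> Bs k" "Ylt P S0"
  shows "pv P \<in> span (pv ` {S \<in> Bs k. Ylt S S0})"
proof (cases "P \<in> Bs k")
  case True
  then show ?thesis using assms(3) by (auto intro: span_base)
next
  case False
  then have "pv P \<in> span (pv ` {S \<in> Bs k. Ylt S P})" using assms by (intro Bseq_skipped) auto
  moreover have "{S \<in> Bs k. Ylt S P} \<subseteq> {S \<in> Bs k. Ylt S S0}"
    using Ylt_trans[of _ n P S0] assms Bseq_subset_Yset by blast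
  ultimately show ?thesis by (meson image_mono span_mono subsetD)
qed

lemma pairvec_notin_span_below:
  assumes "S0 \<in> Bs k"
  shows "pv S0 \<notin> span (pv ` {S \<in> Bs k. Ylt S S0})"
proof
  assume "pv S0 \<in> span (pv ` {S \<in> Bs k. Ylt S S0})"
  moreover have "pv ` {S \<in> Bs k. Ylt S S0} \<subseteq> pv ` Bs k - {pv S0}"
    using inj_on_Bseq[of k] assms by (auto simp: Ylt_def inj_on_def)
  ultimately have "pv S0 \<in> span (pv ` Bs k - {pv S0})" using span_mono by blast
  then show False using independent_Bseq[of k] assms by (auto simp: dependent_def)
qed

end

section \<open>Independence of the triples under \<open>\<Psi>\<close>\<close>

lemma vector_space_tscale: "vector_space sV \<Longrightarrow> vector_space (tscale sV)"
  unfolding vector_space_def tscale_def by (auto simp: fun_eq_iff)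

lemma sum_tscale_apply: "(\<Sum>T\<in>Z. tscale sV (l T) (f T)) k = (\<Sum>T\<in>Z. sV (l T) (f T k))"
  by (induction Z rule: infinite_finite_induct) (auto simp: tscale_def)

lemma card_le_dim_span:
  assumes "vector_space s" "finite G" "\<not> module.dependent s X" "X \<subseteq> module.span s G"
  shows "card X \<le> vector_space.dim s (module.span s G)"
proof -
  interpret vector_space s by fact
  obtain C where C: "C \<subseteq> G" "independent C" "G \<subseteq> span C" "card C = dim G"
    using basis_exists[of G] by blast
  have "X \<subseteq> span C" using assms(4) C(3) by (metis span_minimal subspace_span subset_trans)
  then have "card X \<le> card C"
    using independent_span_bound[OF finite_subset[OF C(1) assms(2)] assms(3)] by blast
  then show ?thesis using C(4) by simp
qed

locale alternating_setting = greedy_pairs sV A u n + U: vector_space sU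
  for sV :: "'a::field \<Rightarrow> 'v::ab_group_add \<Rightarrow> 'v" and A :: "'u::ab_group_add \<Rightarrow> 'u \<Rightarrow> 'v"
    and u n and sU :: "'a \<Rightarrow> 'u \<Rightarrow> 'u" +
  assumes alt_bilinear: "alt_bilinear sU sV A"
    and u_span: "U.span (u ` {1..n}) = UNIV"
    and A_span: "span (range (\<lambda>(x, y). A x y)) = UNIV"
begin

sublocale UV: vector_space_pair sU sV ..

sublocale T: vector_space "tscale sV"
  using vector_space_tscale[OF vector_space_axioms] .

lemma linear_A_left: "Vector_Spaces.linear sU sV (\<lambda>x. A x y)"
  and linear_A_right: "Vector_Spaces.linear sU sV (A x)"
  and A_self: "A x x = 0"
  using alt_bilinear by (auto simp: alt_bilinear_def)

lemma A_antisym: "A y x = - A x y"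
proof -
  have "A (x + y) (x + y) = A x x + A y x + (A x y + A y y)"
    by (simp only: UV.linear_add[OF linear_A_left] UV.linear_add[OF linear_A_right])
  then have "A y x + A x y = 0" by (simp add: A_self add.commute)
  then show ?thesis by (rule eq_neg_iff_add_eq_0[THEN iffD2])
qed

lemma A_basis_in_span:
  assumes "i \<in> {1..n}" "j \<in> {1..n}"
  shows "A (u i) (u j) \<in> span (pv ` Yset n)"
proof (cases i j rule: linorder_cases)
  case less
  then have "{i, j} \<in> Yset n" using assms by (auto simp: Yset_def)
  then show ?thesis using less by (auto simp: pairvec_def intro!: span_base image_eqI[of _ _ "{i, j}"])
next
  case equal
  then show ?thesis by (simp add: A_self span_zero)
next
  case greater
  then have "{j, i} \<in> Yset n" using assms by (auto simp: Yset_def)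
  then have "A (u j) (u i) \<in> span (pv ` Yset n)"
    using greater by (auto simp: pairvec_def intro!: span_base image_eqI[of _ _ "{j, i}"])
  then show ?thesis by (subst A_antisym) (rule span_neg)
qed

lemma A_in_span: "A x y \<in> span (pv ` Yset n)"
proof -
  have right: "A (u i) y \<in> span (pv ` Yset n)" if "i \<in> {1..n}" for i
  proof -
    have "A (u i) y \<in> A (u i) ` U.span (u ` {1..n})" using u_span by simp
    also have "\<dots> = span (A (u i) ` u ` {1..n})" by (simp add: UV.linear_span_image[OF linear_A_right])
    also have "\<dots> \<subseteq> span (pv ` Yset n)"
      using A_basis_in_span[OF that] by (intro span_minimal) auto
    finally show ?thesis .
  qed
  have "A x y \<in> (\<lambda>x. A x y) ` U.span (u ` {1..n})" using u_span by simp
  also have "\<dots> = span ((\<lambda>x. A x y) ` u ` {1..n})"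
    by (simp add: UV.linear_span_image[OF linear_A_left])
  also have "\<dots> \<subseteq> span (pv ` Yset n)" using right by (intro span_minimal) auto
  finally show ?thesis .
qed

lemma span_pairvec_Yset: "span (pv ` Yset n) = UNIV"
proof -
  have "span (range (\<lambda>(x, y). A x y)) \<subseteq> span (pv ` Yset n)"
    using A_in_span by (intro span_minimal) auto
  then show ?thesis using A_span by auto
qed

abbreviation "B \<equiv> Bs (dim UNIV)"

lemma card_B: "card B = dim UNIV"
proof -
  have "card B \<le> dim UNIV" by (rule card_Bseq_le)
  moreover have "dim UNIV \<le> card B" if "\<forall>P\<in>Yset n. pv P \<in> span (pv ` B)"
  proof -
    have "span (pv ` Yset n) \<subseteq> span (pv ` B)" using that by (intro span_minimal) auto
    then have "dim UNIV \<le> card (pv ` B)"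
      using span_pairvec_Yset finite_Bseq by (intro dim_le_card) auto
    then show ?thesis using card_image[OF inj_on_Bseq] by simp
  qed
  ultimately show ?thesis using card_Bseq[of "dim UNIV"] by linarith
qed

definition psi_triple :: "nat set \<Rightarrow> nat \<Rightarrow> 'v" where
  "psi_triple X = Psi_basis A u (Min X) (Min (X - {Min X, Max X})) (Max X)"

lemma psi_triple_sorted: "x < y \<Longrightarrow> y < z \<Longrightarrow> psi_triple {x, y, z} = Psi_basis A u x y z"
proof -
  assume "x < y" "y < z"
  then have "Min {x, y, z} = x" "Max {x, y, z} = z" "{x, y, z} - {x, z} = {y}" by auto
  then show ?thesis by (simp add: psi_triple_def)
qed

lemma psi_triple_outside: "card X = 3 \<Longrightarrow> k \<notin> X \<Longrightarrow> psi_triple X k = 0"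
  by (elim card_3_sorted) (auto simp: psi_triple_sorted Psi_basis_def)

lemma psi_triple_inside:
  assumes "card X = 3" "k \<in> X"
  obtains c where "c \<noteq> 0" "psi_triple X k = sV c (pv (X - {k}))"
proof -
  obtain x y z where X: "x < y" "y < z" "X = {x, y, z}" using card_3_sorted[OF assms(1)] .
  then have psi: "psi_triple X = Psi_basis A u x y z" by (simp add: psi_triple_sorted)
  consider "k = x" | "k = y" | "k = z" using assms(2) X(3) by blast
  then show ?thesis
  proof cases
    case 1
    then have "X - {k} = {y, z}" using X by auto
    then show ?thesis using that[of 1] psi 1 X by (simp add: Psi_basis_def pairvec_def)
  next
    case 2
    then have "X - {k} = {x, z}" using X by auto
    then show ?thesis
      using that[of "-1"] psi 2 X A_antisym[of "u x" "u z"] by (simp add: Psi_basis_def pairvec_def)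
  next
    case 3
    then have "X - {k} = {x, y}" using X by auto
    then show ?thesis using that[of 1] psi 3 X by (simp add: Psi_basis_def pairvec_def)
  qed
qed

lemma psi_triple_lower_coordinate:
  assumes "S0 \<in> B" "k \<notin> S0" "card T = 3" "T \<subseteq> {1..n}" "T \<noteq> insert k S0"
    and "weight T \<le> weight (insert k S0)"
  shows "psi_triple T k \<in> span (pv ` {S \<in> B. Ylt S S0})"
proof (cases "k \<in> T")
  case False
  then show ?thesis using assms(3) by (simp add: psi_triple_outside span_zero)
next
  case True
  define P where "P = T - {k}"
  have "finite T" using assms(4) finite_subset by blast
  then have "finite P" "k \<notin> P" "T = insert k P" "card P = 2"
    using True assms(3) by (simp_all add: P_def insert_absorb)
  have P: "P \<in> Yset n" using \<open>card P = 2\<close> assms(4) by (auto simp: P_def Yset_def)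
  have S0: "S0 \<in> Yset n" using assms(1) Bseq_subset_Yset by blast
  then have "finite S0" by (metis card.infinite card_Yset zero_neq_numeral)
  have "2 ^ k + weight P \<le> 2 ^ k + weight S0"
    using assms(6) weight_insert[OF \<open>finite P\<close> \<open>k \<notin> P\<close>] weight_insert[OF \<open>finite S0\<close> assms(2)]
      \<open>T = insert k P\<close> by simp
  then have "weight P \<le> weight S0" by simp
  moreover have "P \<noteq> S0" using \<open>T = insert k P\<close> assms(5) by blast
  ultimately have "Ylt P S0"
    using Ylt_trichotomy[OF P S0] Ylt_iff_weight_less[OF S0 P] by auto
  with P assms(1) have "pv P \<in> span (pv ` {S \<in> B. Ylt S S0})" by (rule pairvec_below_Bseq)
  moreover obtain c where "psi_triple T k = sV c (pv P)"
    using psi_triple_inside[OF assms(3) True] P_def by blast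
  ultimately show ?thesis by (simp add: span_scale)
qed

lemma psi_triple_independent:
  assumes Z: "Z \<subseteq> Wset n B" and relation: "(\<Sum>T\<in>Z. tscale sV (l T) (psi_triple T)) = 0"
  shows "\<forall>T\<in>Z. l T = 0"
proof (rule ccontr)
  assume "\<not> (\<forall>T\<in>Z. l T = 0)"
  define NZ where "NZ = {T \<in> Z. l T \<noteq> 0}"
  have "finite Z" using Z finite_Wset by (rule finite_subset)
  then have "finite NZ" "NZ \<noteq> {}" using \<open>\<not> (\<forall>T\<in>Z. l T = 0)\<close> by (auto simp: NZ_def)
  then have "Max (weight ` NZ) \<in> weight ` NZ" by (intro Max_in) auto
  then obtain T0 where "T0 \<in> NZ" "weight T0 = Max (weight ` NZ)" by auto
  then have T0_max: "weight T \<le> weight T0" if "T \<in> NZ" for T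
    using \<open>finite NZ\<close> that by simp
  have "T0 \<in> Wset n B" "l T0 \<noteq> 0" using \<open>T0 \<in> NZ\<close> Z by (auto simp: NZ_def)
  then obtain S0 where S0: "S0 \<in> B" "S0 \<subseteq> T0" and T0: "card T0 = 3" "T0 \<subseteq> {1..n}"
    by (auto simp: Wset_def)
  have "card S0 = 2" using S0(1) Bseq_subset_Yset card_Yset by blast
  moreover have "finite T0" using T0(2) finite_subset by blast
  ultimately have "card (T0 - S0) = 1" using S0(2) T0(1) by (simp add: card_Diff_subset finite_subset)
  then obtain k where k: "T0 - S0 = {k}" by (auto simp: card_Suc_eq)
  then have T0_eq: "T0 = insert k S0" and "k \<notin> S0" using S0(2) by auto
  define Sp where "Sp = span (pv ` {S \<in> B. Ylt S S0})"
  have others: "sV (l T) (psi_triple T k) \<in> Sp" if "T \<in> Z - {T0}" for T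
  proof (cases "l T = 0")
    case True
    then show ?thesis by (simp add: Sp_def span_zero)
  next
    case False
    then have "T \<in> NZ" using that by (simp add: NZ_def)
    have "card T = 3" "T \<subseteq> {1..n}" using that Z by (auto simp: Wset_def)
    moreover have "T \<noteq> insert k S0" using that T0_eq by simp
    moreover have "weight T \<le> weight (insert k S0)" using T0_max[OF \<open>T \<in> NZ\<close>] T0_eq by simp
    ultimately have "psi_triple T k \<in> Sp"
      unfolding Sp_def by (rule psi_triple_lower_coordinate[OF S0(1) \<open>k \<notin> S0\<close>])
    then show ?thesis by (simp add: Sp_def span_scale)
  qed
  have "T0 \<in> Z" using \<open>T0 \<in> NZ\<close> by (simp add: NZ_def)
  have "0 = (\<Sum>T\<in>Z. tscale sV (l T) (psi_triple T)) k" using relation by simp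
  also have "\<dots> = (\<Sum>T\<in>Z. sV (l T) (psi_triple T k))" by (rule sum_tscale_apply)
  also have "\<dots> = sV (l T0) (psi_triple T0 k) + (\<Sum>T\<in>Z - {T0}. sV (l T) (psi_triple T k))"
    using \<open>finite Z\<close> \<open>T0 \<in> Z\<close> by (rule sum.remove)
  finally have "sV (l T0) (psi_triple T0 k) + (\<Sum>T\<in>Z - {T0}. sV (l T) (psi_triple T k)) = 0"
    by (rule sym)
  then have "sV (l T0) (psi_triple T0 k) = - (\<Sum>T\<in>Z - {T0}. sV (l T) (psi_triple T k))"
    by (simp add: eq_neg_iff_add_eq_0)
  moreover have "(\<Sum>T\<in>Z - {T0}. sV (l T) (psi_triple T k)) \<in> Sp"
    unfolding Sp_def using others[unfolded Sp_def] by (rule span_sum)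
  ultimately have leading_in: "sV (l T0) (psi_triple T0 k) \<in> Sp" by (simp add: Sp_def span_neg)
  have "k \<in> T0" "T0 - {k} = S0" using T0_eq \<open>k \<notin> S0\<close> by auto
  obtain c where "c \<noteq> 0" "psi_triple T0 k = sV c (pv S0)"
    by (rule psi_triple_inside[OF T0(1) \<open>k \<in> T0\<close>, unfolded \<open>T0 - {k} = S0\<close>])
  then have "sV (l T0 * c) (pv S0) \<in> Sp" using leading_in by simp
  then have "sV (inverse (l T0 * c)) (sV (l T0 * c) (pv S0)) \<in> Sp"
    unfolding Sp_def by (rule span_scale)
  moreover have "inverse (l T0 * c) * (l T0 * c) = 1"
    using \<open>l T0 \<noteq> 0\<close> \<open>c \<noteq> 0\<close> by (intro left_inverse) simp
  ultimately have "pv S0 \<in> Sp" by (simp only: scale_scale scale_one)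
  then show False using pairvec_notin_span_below[OF S0(1)] by (simp add: Sp_def)
qed

lemma inj_on_psi_triple: "inj_on psi_triple (Wset n B)"
proof (rule inj_onI, rule ccontr)
  fix T1 T2 assume T: "T1 \<in> Wset n B" "T2 \<in> Wset n B" "psi_triple T1 = psi_triple T2" "T1 \<noteq> T2"
  define l where "l T = (if T = T1 then 1 else - 1 :: 'a)" for T
  have "(\<Sum>T\<in>{T1, T2}. tscale sV (l T) (psi_triple T))
      = tscale sV 1 (psi_triple T1) + tscale sV (- 1) (psi_triple T1)"
    using T(3,4) by (simp add: l_def)
  also have "\<dots> = tscale sV (1 + - 1) (psi_triple T1)" by (rule T.scale_left_distrib[symmetric])
  finally have "(\<Sum>T\<in>{T1, T2}. tscale sV (l T) (psi_triple T)) = 0" by simp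
  then have "\<forall>T\<in>{T1, T2}. l T = 0" using T(1,2) by (intro psi_triple_independent) auto
  then show False by (simp add: l_def)
qed

lemma independent_psi_triple: "T.independent (psi_triple ` Wset n B)"
proof (rule T.independent_if_scalars_zero)
  show "finite (psi_triple ` Wset n B)" using finite_Wset by simp
  fix f x assume "(\<Sum>x\<in>psi_triple ` Wset n B. tscale sV (f x) x) = 0" "x \<in> psi_triple ` Wset n B"
  then show "f x = 0"
    using psi_triple_independent[of "Wset n B" "f \<circ> psi_triple"] by (auto simp: sum.reindex[OF inj_on_psi_triple])
qed

lemma card_Wset_le_dim_Im_Psi: "card (Wset n B) \<le> T.dim (Im_Psi sV A u n)"
proof -
  define G where "G = {Psi_basis A u a b c | a b c. a \<in> {1..n} \<and> b \<in> {1..n} \<and> c \<in> {1..n}}"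
  have "G \<subseteq> (\<lambda>(a, b, c). Psi_basis A u a b c) ` ({1..n} \<times> {1..n} \<times> {1..n})"
  proof
    fix v assume "v \<in> G"
    then obtain a b c where "v = Psi_basis A u a b c" "a \<in> {1..n}" "b \<in> {1..n}" "c \<in> {1..n}"
      by (auto simp: G_def)
    then show "v \<in> (\<lambda>(a, b, c). Psi_basis A u a b c) ` ({1..n} \<times> {1..n} \<times> {1..n})"
      by (intro image_eqI[of _ _ "(a, b, c)"]) auto
  qed
  then have "finite G" by (rule finite_subset) simp
  have "psi_triple ` Wset n B \<subseteq> G"
  proof
    fix v assume "v \<in> psi_triple ` Wset n B"
    then obtain X where X: "X \<in> Wset n B" "v = psi_triple X" by blast
    have "card X = 3" using X(1) by (simp add: Wset_def)
    then obtain x y z where "x < y" "y < z" "X = {x, y, z}" by (rule card_3_sorted)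
    moreover have "x \<in> {1..n}" "y \<in> {1..n}" "z \<in> {1..n}"
      using X(1) \<open>X = {x, y, z}\<close> by (auto simp: Wset_def)
    moreover have "v = Psi_basis A u x y z" using X(2) calculation by (simp add: psi_triple_sorted)
    ultimately show "v \<in> G" unfolding G_def by blast
  qed
  then have "card (psi_triple ` Wset n B) \<le> T.dim (T.span G)"
    using card_le_dim_span[OF T.vector_space_axioms \<open>finite G\<close> independent_psi_triple]
    by (auto intro: T.span_base)
  then show ?thesis by (simp add: card_image[OF inj_on_psi_triple] Im_Psi_def G_def)
qed

lemma card_Wset_lower_bound:
  assumes "\<not> tree_height_one B"
  shows "baseline n (dim UNIV) + (int (dim UNIV) - 2) \<le> int (card (Wset n B))"
proof -
  have "int (card B) - 2 \<le> excess n B" by (rule excess_nonstar[OF Bseq_subset_Yset finite_Bseq assms])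
  then show ?thesis using card_B by (simp add: excess_def)
qed

end

theorem proposition2p9:
  fixes sU :: "'a::field \<Rightarrow> 'u::ab_group_add \<Rightarrow> 'u"
    and sV :: "'a \<Rightarrow> 'v::ab_group_add \<Rightarrow> 'v"
    and A :: "'u \<Rightarrow> 'u \<Rightarrow> 'v"
    and u :: "nat \<Rightarrow> 'u"
    and n m :: nat
  assumes "vector_space sU" and "vector_space sV"
    and "inj_on u {1..n}"
    and "\<not> module.dependent sU (u ` {1..n})"
    and "module.span sU (u ` {1..n}) = UNIV"
    and "\<exists>BV. finite BV \<and> module.span sV BV = UNIV"
    and "vector_space.dim sV (UNIV :: 'v set) = m"
    and "alt_bilinear sU sV A"
    and "module.span sV (range (\<lambda>(x, y). A x y)) = UNIV"
    and "\<not> tree_height_one (Bset sV A u n)"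
  shows "int (card (Wset n (Bset sV A u n))) \<ge> (\<Sum>i=2..m+1. int n - int i) + (int m - 2)
       \<and> int (vector_space.dim (tscale sV) (Im_Psi sV A u n)) \<ge> (\<Sum>i=2..m+1. int n - int i) + (int m - 2)"
proof -
  have setting: "alternating_setting sV A u n sU"
    using assms by (simp add: alternating_setting_def alternating_setting_axioms_def greedy_pairs_def)
  have "Bset sV A u n = Bseq sV A u n m" using assms(7) by (simp add: Bset_def)
  then show ?thesis
    using alternating_setting.card_Wset_lower_bound[OF setting]
      alternating_setting.card_Wset_le_dim_Im_Psi[OF setting] assms(7,10)
    by (simp add: baseline_def)
qed

end
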